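(* Let $k$ be a field, $J,K$ proper monomial ideals in $Q=k[x,y,z]$, and $I=JK$. Then $[I:x]\cdot[I:y]\subseteq z\,[I:(x,y)]+I$.
   Context: For ideals $I,L$ of $Q$, $I:L=\{f\in Q: fL\subseteq I\}$ and $I:f=I:(f)$. *)

theory Defs
  imports "HOL-Computational_Algebra.Polynomial"
begin

text \<open>The ring Q = k[x,y,z] is represented as nested univariate polynomials
  'a poly poly poly: innermost variable x, middle variable y, outermost z.\<close>

definition varX :: "'a::comm_ring_1 poly poly poly" where
  "varX = [:[:[:0, 1:]:]:]"
definition varY :: "'a::comm_ring_1 poly poly poly" where
  "varY = [:[:0, 1:]:]"
definition varZ :: "'a::comm_ring_1 poly poly poly" where
  "varZ = [:0, 1:]"

definition mono3 :: "nat \<Rightarrow> nat \<Rightarrow> nat \<Rightarrow> 'a::comm_ring_1 poly poly poly" where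
  "mono3 a b c = varX ^ a * varY ^ b * varZ ^ c"

definition is_ideal :: "'a::comm_ring_1 set \<Rightarrow> bool" where
  "is_ideal I \<longleftrightarrow> 0 \<in> I \<and> (\<forall>a\<in>I. \<forall>b\<in>I. a + b \<in> I) \<and> (\<forall>a\<in>I. \<forall>r. r * a \<in> I)"

definition ideal_gen :: "'a::comm_ring_1 set \<Rightarrow> 'a set" where
  "ideal_gen S = \<Inter>{I. is_ideal I \<and> S \<subseteq> I}"

definition ideal_prod :: "'a::comm_ring_1 set \<Rightarrow> 'a set \<Rightarrow> 'a set" where
  "ideal_prod I J = ideal_gen {a * b | a b. a \<in> I \<and> b \<in> J}"

definition colon :: "'a::comm_ring_1 set \<Rightarrow> 'a set \<Rightarrow> 'a set" where
  "colon I L = {f. \<forall>l\<in>L. f * l \<in> I}"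

definition monomial_ideal :: "'a::comm_ring_1 poly poly poly set \<Rightarrow> bool" where
  "monomial_ideal I \<longleftrightarrow> (\<exists>S. S \<subseteq> {mono3 a b c | a b c. True} \<and> I = ideal_gen S)"

end

theory Submission
  imports Defs
begin

text \<open>All ideals involved are spanned by monomials, so it suffices to treat a product
  \<open>m m'\<close> of monomials with \<open>x m, y m' \<in> I\<close>. Then \<open>x m\<close> is divisible by a product \<open>j k\<close> and
  \<open>y m'\<close> by a product \<open>j' k'\<close> of generators of \<open>J\<close> and \<open>K\<close>. Comparing exponents, one of the
  four cross products \<open>j k, j k', j' k, j' k'\<close> already divides \<open>m m'\<close>, unless the \<open>x\<close>- and
  \<open>y\<close>-degrees are so unbalanced that properness of \<open>J\<close> and \<open>K\<close> forces \<open>j k\<close> and \<open>j' k'\<close> to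
  contain \<open>z\<close>; then \<open>m m' = z n\<close> with \<open>x n, y n \<in> I\<close>.\<close>

definition coeff3 :: "'a::comm_ring_1 poly poly poly \<Rightarrow> nat \<Rightarrow> nat \<Rightarrow> nat \<Rightarrow> 'a" where
  "coeff3 f i j k = coeff (coeff (coeff f k) j) i"

definition term3 :: "'a::comm_ring_1 \<Rightarrow> nat \<Rightarrow> nat \<Rightarrow> nat \<Rightarrow> 'a poly poly poly" where
  "term3 c i j k = monom (monom (monom c i) j) k"

lemma term3_0 [simp]: "term3 0 i j k = 0"
  by (simp add: term3_def)

lemma term3_mult: "term3 c i j k * term3 d i' j' k' = term3 (c * d) (i + i') (j + j') (k + k')"
  by (simp add: term3_def mult_monom)

lemma mono3_eq_term3: "mono3 a b c = term3 1 a b c"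
proof -
  have var: "[:0, 1:] = monom (1::'b::comm_ring_1) 1" and const: "\<And>p::'b. [:p:] = monom p 0"
    by (simp_all add: monom_Suc monom_0)
  show ?thesis
    unfolding mono3_def varX_def varY_def varZ_def term3_def var
    unfolding const
    by (simp only: monom_power mult_monom mult_1 mult_1_right mult_zero_left power_one add_0 add_0_right)
qed

lemma mono3_mult: "mono3 a b c * mono3 a' b' c' = mono3 (a + a') (b + b') (c + c')"
  by (simp add: mono3_eq_term3 term3_mult)

lemma mono3_0_0_0 [simp]: "mono3 0 0 0 = 1"
  by (simp add: mono3_def)

lemma varX_eq_mono3: "varX = mono3 1 0 0"
  and varY_eq_mono3: "varY = mono3 0 1 0"
  and varZ_eq_mono3: "varZ = mono3 0 0 1"
  by (simp_all add: mono3_def)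

lemma coeff3_0 [simp]: "coeff3 0 i j k = 0"
  by (simp add: coeff3_def)

lemma coeff3_add: "coeff3 (f + g) i j k = coeff3 f i j k + coeff3 g i j k"
  by (simp add: coeff3_def)

lemma coeff3_term3_mult:
  "coeff3 (term3 c i j k * g) p q r =
    (if i \<le> p \<and> j \<le> q \<and> k \<le> r then c * coeff3 g (p - i) (q - j) (r - k) else 0)"
  by (simp add: coeff3_def term3_def coeff_monom_mult)

lemma coeff3_mono3:
  "coeff3 (mono3 a b c) i j k = (if i = a \<and> j = b \<and> k = c then 1 else 0)"
  by (simp add: mono3_eq_term3 coeff3_def term3_def coeff_monom)

lemma mono3_inj:
  assumes "(mono3 a b c :: 'a::comm_ring_1 poly poly poly) = mono3 a' b' c'"
  shows "a = a' \<and> b = b' \<and> c = c'"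
  using arg_cong[OF assms, of "\<lambda>f. coeff3 f a b c"] by (simp add: coeff3_mono3 split: if_splits)

lemma coeff3_varX_mult: "coeff3 (varX * f) (Suc i) j k = coeff3 f i j k"
  by (simp add: varX_eq_mono3 mono3_eq_term3 coeff3_term3_mult)

lemma coeff3_varY_mult: "coeff3 (varY * f) i (Suc j) k = coeff3 f i j k"
  by (simp add: varY_eq_mono3 mono3_eq_term3 coeff3_term3_mult)

lemma poly3_as_sum_of_terms:
  "f = (\<Sum>k\<le>degree f. \<Sum>j\<le>degree (coeff f k). \<Sum>i\<le>degree (coeff (coeff f k) j).
          term3 (coeff3 f i j k) i j k)"
proof -
  have "f = (\<Sum>k\<le>degree f. monom (coeff f k) k)"
    by (rule poly_as_sum_of_monoms[symmetric])
  also have "\<dots> = (\<Sum>k\<le>degree f. monom (\<Sum>j\<le>degree (coeff f k). monom (coeff (coeff f k) j) j) k)"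
    by (simp add: poly_as_sum_of_monoms)
  also have "\<dots> = (\<Sum>k\<le>degree f. monom (\<Sum>j\<le>degree (coeff f k).
      monom (\<Sum>i\<le>degree (coeff (coeff f k) j). monom (coeff (coeff (coeff f k) j) i) i) j) k)"
    by (simp add: poly_as_sum_of_monoms)
  finally show ?thesis
    by (simp add: monom_sum term3_def coeff3_def)
qed

lemma sum_mem_if_add_closed:
  assumes "0 \<in> T" "\<And>a b. a \<in> T \<Longrightarrow> b \<in> T \<Longrightarrow> a + b \<in> T" "\<And>x. x \<in> A \<Longrightarrow> h x \<in> T"
  shows "sum h A \<in> T"
proof (cases "finite A")
  case True
  then show ?thesis
    using assms(3) by (induction A rule: finite_induct) (simp_all add: assms(1,2))
qed (simp add: assms(1))

lemma mult_mem_if_term_mults_mem: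
  assumes "0 \<in> T" "\<And>a b. a \<in> T \<Longrightarrow> b \<in> T \<Longrightarrow> a + b \<in> T"
    and "\<And>i j k. coeff3 f i j k \<noteq> 0 \<Longrightarrow> term3 (coeff3 f i j k) i j k * g \<in> T"
  shows "f * g \<in> T"
proof -
  have "f * g = (\<Sum>k\<le>degree f. \<Sum>j\<le>degree (coeff f k). \<Sum>i\<le>degree (coeff (coeff f k) j).
          term3 (coeff3 f i j k) i j k * g)"
    by (subst arg_cong[where f = "\<lambda>p. p * g", OF poly3_as_sum_of_terms])
      (simp add: sum_distrib_right)
  also have "\<dots> \<in> T"
  proof (intro sum_mem_if_add_closed[OF assms(1,2)])
    fix i j k
    show "term3 (coeff3 f i j k) i j k * g \<in> T"
      using assms(1) assms(3)[of i j k] by (cases "coeff3 f i j k = 0") simp_all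
  qed
  finally show ?thesis .
qed

lemma is_ideal_ideal_gen: "is_ideal (ideal_gen S)"
  by (auto simp: ideal_gen_def is_ideal_def)

lemma generators_subset_ideal_gen: "S \<subseteq> ideal_gen S"
  by (auto simp: ideal_gen_def)

lemma ideal_gen_least: "is_ideal T \<Longrightarrow> S \<subseteq> T \<Longrightarrow> ideal_gen S \<subseteq> T"
  by (auto simp: ideal_gen_def)

lemma ideal_zero: "is_ideal T \<Longrightarrow> 0 \<in> T"
  and ideal_add: "is_ideal T \<Longrightarrow> a \<in> T \<Longrightarrow> b \<in> T \<Longrightarrow> a + b \<in> T"
  and ideal_mult_left: "is_ideal T \<Longrightarrow> a \<in> T \<Longrightarrow> r * a \<in> T"
  by (simp_all add: is_ideal_def)

lemma ideal_eq_UNIV_if_one_mem: "is_ideal T \<Longrightarrow> 1 \<in> T \<Longrightarrow> T = UNIV"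
  using ideal_mult_left[of T 1] by auto

lemma is_ideal_mult_preimage: "is_ideal T \<Longrightarrow> is_ideal {b. m * b \<in> T}"
  by (auto simp: is_ideal_def distrib_left mult.left_commute)

lemma is_ideal_colon: "is_ideal I \<Longrightarrow> is_ideal (colon I L)"
  by (auto simp: is_ideal_def colon_def distrib_right mult.assoc)

lemma colon_ideal_gen:
  assumes "is_ideal I"
  shows "colon I (ideal_gen G) = {f. \<forall>g\<in>G. f * g \<in> I}"
proof -
  have "ideal_gen G \<subseteq> {g. f * g \<in> I}" if "\<forall>g\<in>G. f * g \<in> I" for f
    using that by (intro ideal_gen_least is_ideal_mult_preimage assms) auto
  then show ?thesis
    using generators_subset_ideal_gen[of G] by (auto simp: colon_def)
qed

lemma is_ideal_ideal_prod: "is_ideal (ideal_prod A B)"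
  by (simp add: ideal_prod_def is_ideal_ideal_gen)

lemma ideal_prod_least:
  "is_ideal T \<Longrightarrow> (\<And>a b. a \<in> A \<Longrightarrow> b \<in> B \<Longrightarrow> a * b \<in> T) \<Longrightarrow> ideal_prod A B \<subseteq> T"
  unfolding ideal_prod_def by (rule ideal_gen_least) auto

lemma ideal_prod_ideal_gen:
  "ideal_prod (ideal_gen S) (ideal_gen S') = ideal_gen {a * b | a b. a \<in> S \<and> b \<in> S'}"
  (is "_ = ideal_gen ?G")
proof
  have P: "is_ideal (ideal_gen ?G)" by (rule is_ideal_ideal_gen)
  have gen_mult: "s * b \<in> ideal_gen ?G" if s: "s \<in> S" and b: "b \<in> ideal_gen S'" for s b
  proof -
    have "S' \<subseteq> {b. s * b \<in> ideal_gen ?G}"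
      using s generators_subset_ideal_gen[of ?G] by blast
    then have "ideal_gen S' \<subseteq> {b. s * b \<in> ideal_gen ?G}"
      by (rule ideal_gen_least[OF is_ideal_mult_preimage[OF P]])
    with b show ?thesis by blast
  qed
  have mult: "a * b \<in> ideal_gen ?G" if a: "a \<in> ideal_gen S" and b: "b \<in> ideal_gen S'" for a b
  proof -
    have "S \<subseteq> {a. b * a \<in> ideal_gen ?G}"
      using gen_mult b by (auto simp: mult.commute)
    then have "ideal_gen S \<subseteq> {a. b * a \<in> ideal_gen ?G}"
      by (rule ideal_gen_least[OF is_ideal_mult_preimage[OF P]])
    with a show ?thesis by (auto simp: mult.commute)
  qed
  show "ideal_prod (ideal_gen S) (ideal_gen S') \<subseteq> ideal_gen ?G"
    by (rule ideal_prod_least[OF P mult])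
next
  have "?G \<subseteq> {a * b | a b. a \<in> ideal_gen S \<and> b \<in> ideal_gen S'}"
    using generators_subset_ideal_gen[of S] generators_subset_ideal_gen[of S'] by blast
  also have "\<dots> \<subseteq> ideal_prod (ideal_gen S) (ideal_gen S')"
    unfolding ideal_prod_def by (rule generators_subset_ideal_gen)
  finally show "ideal_gen ?G \<subseteq> ideal_prod (ideal_gen S) (ideal_gen S')"
    by (rule ideal_gen_least[OF is_ideal_ideal_prod])
qed

lemma is_ideal_lincomb:
  assumes "is_ideal A" "is_ideal B"
  shows "is_ideal {c * a + b | a b. a \<in> A \<and> b \<in> B}"
  unfolding is_ideal_def
proof (intro conjI ballI allI)
  show "0 \<in> {c * a + b | a b. a \<in> A \<and> b \<in> B}"
    using ideal_zero[OF assms(1)] ideal_zero[OF assms(2)] by force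
next
  fix u v assume "u \<in> {c * a + b | a b. a \<in> A \<and> b \<in> B}" "v \<in> {c * a + b | a b. a \<in> A \<and> b \<in> B}"
  then obtain a b a' b' where "u = c * a + b" "v = c * a' + b'" "a \<in> A" "b \<in> B" "a' \<in> A" "b' \<in> B"
    by blast
  moreover have "u + v = c * (a + a') + (b + b')" using calculation by (simp add: algebra_simps)
  ultimately show "u + v \<in> {c * a + b | a b. a \<in> A \<and> b \<in> B}"
    using ideal_add[OF assms(1)] ideal_add[OF assms(2)] by blast
next
  fix u r assume "u \<in> {c * a + b | a b. a \<in> A \<and> b \<in> B}"
  then obtain a b where "u = c * a + b" "a \<in> A" "b \<in> B" by blast
  moreover have "r * u = c * (r * a) + r * b" using calculation by (simp add: algebra_simps)
  ultimately show "r * u \<in> {c * a + b | a b. a \<in> A \<and> b \<in> B}"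
    using ideal_mult_left[OF assms(1)] ideal_mult_left[OF assms(2)] by blast
qed

lemma mult_mem_if_support_mults_mem:
  assumes T: "is_ideal T"
    and "\<And>i j k i' j' k'. coeff3 f i j k \<noteq> 0 \<Longrightarrow> coeff3 g i' j' k' \<noteq> 0 \<Longrightarrow>
      mono3 i j k * mono3 i' j' k' \<in> T"
  shows "f * g \<in> T"
proof -
  have split: "term3 c i j k * h = term3 c 0 0 0 * (mono3 i j k * h)" for c i j k h
    by (simp add: mono3_eq_term3 term3_mult flip: mult.assoc)
  show ?thesis
  proof (rule mult_mem_if_term_mults_mem[OF ideal_zero[OF T] ideal_add[OF T]])
    fix i j k assume f: "coeff3 f i j k \<noteq> 0"
    have "g * mono3 i j k \<in> T"
    proof (rule mult_mem_if_term_mults_mem[OF ideal_zero[OF T] ideal_add[OF T]])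
      fix i' j' k' assume "coeff3 g i' j' k' \<noteq> 0"
      then have "mono3 i' j' k' * mono3 i j k \<in> T"
        using assms(2)[OF f] by (simp add: mult.commute)
      then show "term3 (coeff3 g i' j' k') i' j' k' * mono3 i j k \<in> T"
        by (subst split) (rule ideal_mult_left[OF T])
    qed
    then show "term3 (coeff3 f i j k) i j k * g \<in> T"
      by (subst split) (rule ideal_mult_left[OF T], simp add: mult.commute)
  qed
qed

abbreviation monomials3 :: "'a::comm_ring_1 poly poly poly set" where
  "monomials3 \<equiv> {mono3 a b c | a b c. True}"

definition monomial_multiples :: "'a::comm_ring_1 poly poly poly set \<Rightarrow> 'a poly poly poly set" where
  "monomial_multiples S =
    {f. \<forall>i j k. coeff3 f i j k \<noteq> 0 \<longrightarrow> (\<exists>a b c. mono3 a b c \<in> S \<and> a \<le> i \<and> b \<le> j \<and> c \<le> k)}"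

lemma is_ideal_monomial_multiples: "is_ideal (monomial_multiples S)"
proof -
  have zero: "0 \<in> monomial_multiples S"
    by (simp add: monomial_multiples_def)
  have add: "a + b \<in> monomial_multiples S"
    if "a \<in> monomial_multiples S" "b \<in> monomial_multiples S" for a b
    unfolding monomial_multiples_def
  proof (intro CollectI allI impI)
    fix i j k assume "coeff3 (a + b) i j k \<noteq> 0"
    then have "coeff3 a i j k \<noteq> 0 \<or> coeff3 b i j k \<noteq> 0"
      by (auto simp: coeff3_add)
    with that show "\<exists>a b c. mono3 a b c \<in> S \<and> a \<le> i \<and> b \<le> j \<and> c \<le> k"
      unfolding monomial_multiples_def by blast
  qed
  have "r * a \<in> monomial_multiples S" if a: "a \<in> monomial_multiples S" for r a
  proof (rule mult_mem_if_term_mults_mem[OF zero add])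
    fix i j k
    show "term3 (coeff3 r i j k) i j k * a \<in> monomial_multiples S"
      unfolding monomial_multiples_def
    proof (intro CollectI allI impI)
      fix p q s assume "coeff3 (term3 (coeff3 r i j k) i j k * a) p q s \<noteq> 0"
      then have "i \<le> p" "j \<le> q" "k \<le> s" and "coeff3 a (p - i) (q - j) (s - k) \<noteq> 0"
        by (auto simp: coeff3_term3_mult split: if_splits)
      with a obtain a' b' c' where "mono3 a' b' c' \<in> S" "a' \<le> p - i" "b' \<le> q - j" "c' \<le> s - k"
        unfolding monomial_multiples_def by blast
      then show "\<exists>a b c. mono3 a b c \<in> S \<and> a \<le> p \<and> b \<le> q \<and> c \<le> s"
        by (meson diff_le_self order_trans)
    qed
  qed
  with zero add show ?thesis
    by (simp add: is_ideal_def)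
qed

lemma ideal_gen_monomials:
  assumes "S \<subseteq> monomials3"
  shows "ideal_gen S = monomial_multiples S"
proof
  have "S \<subseteq> monomial_multiples S"
  proof
    fix s assume "s \<in> S"
    moreover obtain a b c where "s = mono3 a b c"
      using \<open>s \<in> S\<close> assms by blast
    ultimately show "s \<in> monomial_multiples S"
      by (auto simp: monomial_multiples_def coeff3_mono3)
  qed
  then show "ideal_gen S \<subseteq> monomial_multiples S"
    by (rule ideal_gen_least[OF is_ideal_monomial_multiples])
next
  have I: "is_ideal (ideal_gen S)" by (rule is_ideal_ideal_gen)
  show "monomial_multiples S \<subseteq> ideal_gen S"
  proof
    fix f assume f: "f \<in> monomial_multiples S"
    have "f * 1 \<in> ideal_gen S"
    proof (rule mult_mem_if_term_mults_mem[OF ideal_zero[OF I] ideal_add[OF I]])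
      fix i j k assume "coeff3 f i j k \<noteq> 0"
      then obtain a b c where m: "mono3 a b c \<in> S" "a \<le> i" "b \<le> j" "c \<le> k"
        using f unfolding monomial_multiples_def by blast
      then have "term3 (coeff3 f i j k) i j k * 1 =
          term3 (coeff3 f i j k) (i - a) (j - b) (k - c) * mono3 a b c"
        by (simp add: mono3_eq_term3 term3_mult)
      also have "\<dots> \<in> ideal_gen S"
        using m(1) generators_subset_ideal_gen by (blast intro: ideal_mult_left[OF I])
      finally show "term3 (coeff3 f i j k) i j k * 1 \<in> ideal_gen S" .
    qed
    then show "f \<in> ideal_gen S" by simp
  qed
qed

lemma mono3_mem_ideal_gen_iff:
  assumes "S \<subseteq> monomials3"
  shows "mono3 i j k \<in> ideal_gen S \<longleftrightarrow> (\<exists>a b c. mono3 a b c \<in> S \<and> a \<le> i \<and> b \<le> j \<and> c \<le> k)"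
  by (simp add: ideal_gen_monomials[OF assms] monomial_multiples_def coeff3_mono3)

lemma mono3_mem_ideal_gen_if_coeff3:
  assumes "S \<subseteq> monomials3" "f \<in> ideal_gen S" "coeff3 f i j k \<noteq> 0"
  shows "mono3 i j k \<in> ideal_gen S"
proof -
  have "f \<in> monomial_multiples S"
    using assms(1,2) by (simp add: ideal_gen_monomials)
  with assms(3) show ?thesis
    unfolding mono3_mem_ideal_gen_iff[OF assms(1)] monomial_multiples_def by blast
qed

lemma monomial_products_subset:
  assumes "S \<subseteq> monomials3" "S' \<subseteq> monomials3"
  shows "{a * b | a b. a \<in> S \<and> b \<in> S'} \<subseteq> monomials3"
proof
  fix m assume "m \<in> {a * b | a b. a \<in> S \<and> b \<in> S'}"
  then obtain s s' where "m = s * s'" "s \<in> S" "s' \<in> S'"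
    by blast
  moreover obtain a1 b1 c1 a2 b2 c2 where "s = mono3 a1 b1 c1" "s' = mono3 a2 b2 c2"
    using calculation(2,3) assms by blast
  ultimately show "m \<in> monomials3"
    by (auto simp: mono3_mult)
qed

lemma mono3_mem_monomial_products_iff:
  fixes S S' :: "'a::comm_ring_1 poly poly poly set"
  assumes "S \<subseteq> monomials3" "S' \<subseteq> monomials3"
  shows "mono3 a b c \<in> {s * s' | s s'. s \<in> S \<and> s' \<in> S'} \<longleftrightarrow>
    (\<exists>a1 b1 c1 a2 b2 c2. mono3 a1 b1 c1 \<in> S \<and> mono3 a2 b2 c2 \<in> S' \<and>
      a = a1 + a2 \<and> b = b1 + b2 \<and> c = c1 + c2)"
proof
  assume "mono3 a b c \<in> {s * s' | s s'. s \<in> S \<and> s' \<in> S'}"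
  then obtain s s' where "mono3 a b c = s * s'" "s \<in> S" "s' \<in> S'"
    by blast
  moreover obtain a1 b1 c1 a2 b2 c2 where "s = mono3 a1 b1 c1" "s' = mono3 a2 b2 c2"
    using calculation(2,3) assms by blast
  ultimately have "mono3 a1 b1 c1 \<in> S" "mono3 a2 b2 c2 \<in> S'"
    "mono3 a b c = (mono3 a1 b1 c1 * mono3 a2 b2 c2 :: 'a poly poly poly)"
    by simp_all
  then show "\<exists>a1 b1 c1 a2 b2 c2. mono3 a1 b1 c1 \<in> S \<and> mono3 a2 b2 c2 \<in> S' \<and>
      a = a1 + a2 \<and> b = b1 + b2 \<and> c = c1 + c2"
    unfolding mono3_mult by (blast dest: mono3_inj)
next
  assume "\<exists>a1 b1 c1 a2 b2 c2. mono3 a1 b1 c1 \<in> S \<and> mono3 a2 b2 c2 \<in> S' \<and>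
      a = a1 + a2 \<and> b = b1 + b2 \<and> c = c1 + c2"
  then obtain a1 b1 c1 a2 b2 c2 where "mono3 a1 b1 c1 \<in> S" "mono3 a2 b2 c2 \<in> S'"
      "mono3 a b c = (mono3 a1 b1 c1 * mono3 a2 b2 c2 :: 'a poly poly poly)"
    by (auto simp: mono3_mult)
  then show "mono3 a b c \<in> {s * s' | s s'. s \<in> S \<and> s' \<in> S'}"
    by blast
qed

lemma mono3_mem_ideal_prod_iff:
  assumes "S \<subseteq> monomials3" "S' \<subseteq> monomials3"
  shows "mono3 p q r \<in> ideal_prod (ideal_gen S) (ideal_gen S') \<longleftrightarrow>
    (\<exists>a1 b1 c1 a2 b2 c2. mono3 a1 b1 c1 \<in> S \<and> mono3 a2 b2 c2 \<in> S' \<and>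
      a1 + a2 \<le> p \<and> b1 + b2 \<le> q \<and> c1 + c2 \<le> r)"
  unfolding ideal_prod_ideal_gen mono3_mem_ideal_gen_iff[OF monomial_products_subset[OF assms]]
    mono3_mem_monomial_products_iff[OF assms]
  by blast

lemma one_notin_generators_if_proper:
  "ideal_gen S \<noteq> UNIV \<Longrightarrow> 1 \<notin> S"
  using generators_subset_ideal_gen[of S] ideal_eq_UNIV_if_one_mem[OF is_ideal_ideal_gen, of S] by auto

text \<open>Here \<open>a, b\<close> (resp. \<open>c, d\<close>) are the exponents of generators of \<open>J\<close> and \<open>K\<close> whose
  product divides \<open>x m\<close> (resp. \<open>y m'\<close>), and \<open>u, v\<close> are the exponents of \<open>m, m'\<close>; the last
  case is the one where \<open>m m'\<close> is divisible by \<open>z\<close>.\<close>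

lemma exponent_cases:
  fixes a1 a2 a3 b1 b2 b3 c1 c2 c3 d1 d2 d3 u1 u2 u3 v1 v2 v3 :: nat
  assumes "a1 + b1 \<le> u1 + 1" "a2 + b2 \<le> u2" "a3 + b3 \<le> u3"
    and "c1 + d1 \<le> v1" "c2 + d2 \<le> v2 + 1" "c3 + d3 \<le> v3"
    and "0 < a1 + a2 + a3" "0 < b1 + b2 + b3" "0 < c1 + c2 + c3" "0 < d1 + d2 + d3"
  obtains "a1 + b1 \<le> u1 + v1" "a2 + b2 \<le> u2 + v2" "a3 + b3 \<le> u3 + v3"
  | "a1 + d1 \<le> u1 + v1" "a2 + d2 \<le> u2 + v2" "a3 + d3 \<le> u3 + v3"
  | "c1 + b1 \<le> u1 + v1" "c2 + b2 \<le> u2 + v2" "c3 + b3 \<le> u3 + v3"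
  | "c1 + d1 \<le> u1 + v1" "c2 + d2 \<le> u2 + v2" "c3 + d3 \<le> u3 + v3"
  | "a3 + b3 < u3 + v3" "c3 + d3 < u3 + v3"
proof -
  consider "1 \<le> c1 + d1 \<or> a1 + b1 = 0" | "1 \<le> a2 + b2 \<or> c2 + d2 = 0" | "1 \<le> b1" "1 \<le> c2"
    | "1 \<le> a1" "1 \<le> d2" | "0 < a3 + b3" "0 < c3 + d3"
    using assms by arith
  then show thesis
    using assms that by cases linarith+
qed

lemma mono3_mult_mem_ideal_prod_cases:
  fixes S S' :: "'a::comm_ring_1 poly poly poly set"
  assumes S: "S \<subseteq> monomials3" "1 \<notin> S" and S': "S' \<subseteq> monomials3" "1 \<notin> S'"
  defines "I \<equiv> ideal_prod (ideal_gen S) (ideal_gen S')"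
  assumes x_mem: "mono3 (Suc i) j k \<in> I" and y_mem: "mono3 i' (Suc j') k' \<in> I"
  shows "mono3 (i + i') (j + j') (k + k') \<in> I \<or>
    (\<exists>w. k + k' = Suc w \<and> mono3 (Suc (i + i')) (j + j') w \<in> I \<and> mono3 (i + i') (Suc (j + j')) w \<in> I)"
proof -
  note mem_I = mono3_mem_ideal_prod_iff[OF S(1) S'(1), folded I_def]
  have mem_I_if_divides: "mono3 p q r \<in> I"
    if "mono3 e1 e2 e3 \<in> S" "mono3 f1 f2 f3 \<in> S'" "e1 + f1 \<le> p" "e2 + f2 \<le> q" "e3 + f3 \<le> r"
    for e1 e2 e3 f1 f2 f3 p q r
    unfolding mem_I using that by blast
  have pos: "0 < e1 + e2 + e3" if "mono3 e1 e2 e3 \<in> S \<or> mono3 e1 e2 e3 \<in> S'" for e1 e2 e3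
    using that S(2) S'(2) by (cases "e1 = 0 \<and> e2 = 0 \<and> e3 = 0") auto
  obtain a1 a2 a3 b1 b2 b3 where ab: "mono3 a1 a2 a3 \<in> S" "mono3 b1 b2 b3 \<in> S'"
    "a1 + b1 \<le> i + 1" "a2 + b2 \<le> j" "a3 + b3 \<le> k"
    using x_mem mem_I by auto
  obtain c1 c2 c3 d1 d2 d3 where cd: "mono3 c1 c2 c3 \<in> S" "mono3 d1 d2 d3 \<in> S'"
    "c1 + d1 \<le> i'" "c2 + d2 \<le> j' + 1" "c3 + d3 \<le> k'"
    using y_mem mem_I by auto
  have "0 < a1 + a2 + a3" "0 < b1 + b2 + b3" "0 < c1 + c2 + c3" "0 < d1 + d2 + d3"
    using pos ab(1,2) cd(1,2) by blast+
  then show ?thesis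
  proof (rule exponent_cases[OF ab(3-5) cd(3-5)])
    assume "a1 + b1 \<le> i + i'" "a2 + b2 \<le> j + j'" "a3 + b3 \<le> k + k'"
    with mem_I_if_divides[OF ab(1,2)] show ?thesis by blast
  next
    assume "a1 + d1 \<le> i + i'" "a2 + d2 \<le> j + j'" "a3 + d3 \<le> k + k'"
    with mem_I_if_divides[OF ab(1) cd(2)] show ?thesis by blast
  next
    assume "c1 + b1 \<le> i + i'" "c2 + b2 \<le> j + j'" "c3 + b3 \<le> k + k'"
    with mem_I_if_divides[OF cd(1) ab(2)] show ?thesis by blast
  next
    assume "c1 + d1 \<le> i + i'" "c2 + d2 \<le> j + j'" "c3 + d3 \<le> k + k'"
    with mem_I_if_divides[OF cd(1,2)] show ?thesis by blast
  next
    assume z: "a3 + b3 < k + k'" "c3 + d3 < k + k'"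
    then obtain w where w: "k + k' = Suc w"
      using less_imp_Suc_add by blast
    have "mono3 (Suc (i + i')) (j + j') w \<in> I"
      by (rule mem_I_if_divides[OF ab(1,2)]) (use ab z w in linarith)+
    moreover have "mono3 (i + i') (Suc (j + j')) w \<in> I"
      by (rule mem_I_if_divides[OF cd(1,2)]) (use cd z w in linarith)+
    ultimately show ?thesis
      using w by blast
  qed
qed

lemma mono3_mem_z_colon_plus:
  fixes I :: "'a::comm_ring_1 poly poly poly set"
  assumes I: "is_ideal I"
    and "mono3 p q r \<in> I \<or> (\<exists>w. r = Suc w \<and> mono3 (Suc p) q w \<in> I \<and> mono3 p (Suc q) w \<in> I)"
  shows "mono3 p q r \<in> {varZ * a + b | a b. a \<in> colon I (ideal_gen {varX, varY}) \<and> b \<in> I}"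
  using assms(2)
proof
  assume "mono3 p q r \<in> I"
  moreover have "mono3 p q r = varZ * 0 + (mono3 p q r :: 'a poly poly poly)"
    by simp
  ultimately show ?thesis
    using ideal_zero[OF is_ideal_colon[OF I]] by blast
next
  assume "\<exists>w. r = Suc w \<and> mono3 (Suc p) q w \<in> I \<and> mono3 p (Suc q) w \<in> I"
  then obtain w where w: "r = Suc w" "mono3 (Suc p) q w \<in> I" "mono3 p (Suc q) w \<in> I"
    by blast
  then have "mono3 p q w \<in> colon I (ideal_gen {varX, varY})"
    by (simp add: colon_ideal_gen[OF I] varX_eq_mono3 varY_eq_mono3 mono3_mult)
  moreover have "mono3 p q r = varZ * mono3 p q w + (0 :: 'a poly poly poly)"
    by (simp add: w(1) varZ_eq_mono3 mono3_mult)
  ultimately show ?thesis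
    using ideal_zero[OF I] by blast
qed

theorem mainTheorem7:
  fixes J K :: "'a::field poly poly poly set"
  assumes "monomial_ideal J" and "monomial_ideal K"
    and "J \<noteq> UNIV" and "K \<noteq> UNIV"
  defines "I \<equiv> ideal_prod J K"
  shows "ideal_prod (colon I (ideal_gen {varX})) (colon I (ideal_gen {varY}))
         \<subseteq> {varZ * a + b | a b. a \<in> colon I (ideal_gen {varX, varY}) \<and> b \<in> I}"
proof -
  obtain S S' where S: "S \<subseteq> monomials3" "J = ideal_gen S" and S': "S' \<subseteq> monomials3" "K = ideal_gen S'"
    using assms(1,2) unfolding monomial_ideal_def by blast
  have I_eq: "I = ideal_prod (ideal_gen S) (ideal_gen S')"
    by (simp add: I_def S(2) S'(2))
  have I: "is_ideal I"
    by (simp add: I_def is_ideal_ideal_prod)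
  have support: "mono3 p q r \<in> I" if "h \<in> I" "coeff3 h p q r \<noteq> 0" for h p q r
    using mono3_mem_ideal_gen_if_coeff3[OF monomial_products_subset[OF S(1) S'(1)]] that
    unfolding I_eq ideal_prod_ideal_gen by blast
  have "1 \<notin> S" "1 \<notin> S'"
    using assms(3,4) unfolding S(2) S'(2) by (simp_all add: one_notin_generators_if_proper)
  note mono3_mult_cases = mono3_mult_mem_ideal_prod_cases[OF S(1) this(1) S'(1) this(2), folded I_eq]
  have target: "is_ideal {varZ * a + b | a b. a \<in> colon I (ideal_gen {varX, varY}) \<and> b \<in> I}"
    by (intro is_ideal_lincomb is_ideal_colon I)
  show ?thesis
  proof (rule ideal_prod_least[OF target])
    fix f g assume "f \<in> colon I (ideal_gen {varX})" "g \<in> colon I (ideal_gen {varY})"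
    then have f: "varX * f \<in> I" and g: "varY * g \<in> I"
      by (simp_all add: colon_ideal_gen[OF I] mult.commute)
    show "f * g \<in> {varZ * a + b | a b. a \<in> colon I (ideal_gen {varX, varY}) \<and> b \<in> I}"
    proof (rule mult_mem_if_support_mults_mem[OF target])
      fix i j k i' j' k' assume "coeff3 f i j k \<noteq> 0" "coeff3 g i' j' k' \<noteq> 0"
      then have "mono3 (Suc i) j k \<in> I" "mono3 i' (Suc j') k' \<in> I"
        using support[OF f, of "Suc i" j k] support[OF g, of i' "Suc j'" k']
        by (simp_all add: coeff3_varX_mult coeff3_varY_mult)
      then show "mono3 i j k * mono3 i' j' k' \<in>
          {varZ * a + b | a b. a \<in> colon I (ideal_gen {varX, varY}) \<and> b \<in> I}"
        unfolding mono3_mult by (intro mono3_mem_z_colon_plus I mono3_mult_cases)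
    qed
  qed
qed

end
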